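(* Assume the following statement holds: for every complex sequence $(b_n)_{n\geq 0}$ such that for some integer $l\geq 1$ one has $b_nb_{n+l}=0$ for all $n\geq 0$, if $a_n:=\sum_{k=0}^n(-1)^{n-k}\binom{n}{k}b_k$ satisfies $\lim_{n\to\infty}a_n=0$, then $b_n=0$ for all $n$. Then, for any $\theta>0$: if $\mathcal{P}=\sum_{p,q=0}^\infty a_{p,q}x^py^q\in A^\infty(\mathbb{R}^2_\theta)$ satisfies $\mathcal{P}^2=\mathcal{P}=\mathcal{P}^*$ and there is $k\in\mathbb{N}$ such that $a_{p,q}=0$ for all $(p,q)$ with $|p-q|>k$, then $\mathcal{P}=0$ or $\mathcal{P}=1$.
   Context: $A^\infty(\mathbb{R}^2_\theta)$ is the algebra of formal series $\sum_{p,q\geq 0}a_{p,q}x^py^q$, $a_{p,q}\in\mathbb{C}$, whose coefficient function $(p,q)\mapsto a_{p,q}$ is of Schwartz class on $\mathbb{N}^2$ (for every $r\geq1$ there is $C_r$ with $\sup_{p,q}(1+p^2+q^2)^r|a_{p,q}|<C_r$), where $x,y$ are self-adjoint with $[x,y]=xy-yx=-i\theta$, i.e. $yx=xy+i\theta$; products are computed by reordering into the normal form $x^py^q$ using this relation, and the adjoint is determined by $(a\,x^py^q)^*=\bar a\,y^qx^p$ (then reordered). *)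

theory Defs
  imports Complex_Main
begin

text \<open>Elements of A^infinity(R^2_theta) are represented by their coefficient
  functions a :: nat => nat => complex (a p q is the coefficient of x^p y^q).\<close>

definition schwartz_coeff :: "(nat \<Rightarrow> nat \<Rightarrow> complex) \<Rightarrow> bool" where
  "schwartz_coeff a \<longleftrightarrow>
     (\<forall>r::nat. r \<ge> 1 \<longrightarrow> (\<exists>C::real. \<forall>p q.
        (1 + real p ^ 2 + real q ^ 2) ^ r * cmod (a p q) < C))"

text \<open>Normal ordering: y^q x^r = sum_j j! C(q,j) C(r,j) (i theta)^j x^(r-j) y^(q-j).
  The coefficient of x^m y^n in the product a*b collects all contributions with
  p + r - j = m and q + s - j = n, grouped by the power j of (i theta):
  for fixed m n j this is a finite sum over p <= m, s <= n
  (with q = j + n - s, r = j + m - p).\<close>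

definition moyal_prod_term ::
  "real \<Rightarrow> (nat \<Rightarrow> nat \<Rightarrow> complex) \<Rightarrow> (nat \<Rightarrow> nat \<Rightarrow> complex) \<Rightarrow> nat \<Rightarrow> nat \<Rightarrow> nat \<Rightarrow> complex" where
  "moyal_prod_term \<theta> a b m n j =
     (\<Sum>p\<le>m. \<Sum>s\<le>n. a p (j + n - s) * b (j + m - p) s
        * of_nat (fact j) * of_nat ((j + n - s) choose j) * of_nat ((j + m - p) choose j)
        * (\<i> * of_real \<theta>) ^ j)"

definition moyal_prod_eq ::
  "real \<Rightarrow> (nat \<Rightarrow> nat \<Rightarrow> complex) \<Rightarrow> (nat \<Rightarrow> nat \<Rightarrow> complex) \<Rightarrow> (nat \<Rightarrow> nat \<Rightarrow> complex) \<Rightarrow> bool" where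
  "moyal_prod_eq \<theta> a b c \<longleftrightarrow> (\<forall>m n. (moyal_prod_term \<theta> a b m n) sums (c m n))"

text \<open>Adjoint: (a x^p y^q)^* = conj a y^q x^p, reordered. The coefficient of
  x^m y^n in a^* receives the contribution with p = m + j, q = n + j.\<close>

definition moyal_adj_term ::
  "real \<Rightarrow> (nat \<Rightarrow> nat \<Rightarrow> complex) \<Rightarrow> nat \<Rightarrow> nat \<Rightarrow> nat \<Rightarrow> complex" where
  "moyal_adj_term \<theta> a m n j =
     cnj (a (m + j) (n + j)) * of_nat (fact j) * of_nat ((n + j) choose j)
       * of_nat ((m + j) choose j) * (\<i> * of_real \<theta>) ^ j"

definition moyal_adj_eq ::
  "real \<Rightarrow> (nat \<Rightarrow> nat \<Rightarrow> complex) \<Rightarrow> (nat \<Rightarrow> nat \<Rightarrow> complex) \<Rightarrow> bool" where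
  "moyal_adj_eq \<theta> a c \<longleftrightarrow> (\<forall>m n. (moyal_adj_term \<theta> a m n) sums (c m n))"

definition unit_coeff :: "nat \<Rightarrow> nat \<Rightarrow> complex" where
  "unit_coeff p q = (if p = 0 \<and> q = 0 then 1 else 0)"

end

theory Submission
  imports Defs "HOL-Computational_Algebra.Polynomial"
begin

(* Let x act on C[z] as multiplication by z and y as i theta d/dz; this respects
   [x, y] = -i theta, so a banded element P acts by a banded matrix M with M^2 = M.
   On the outermost diagonal at distance k > 0 of M, the identity M^2 = M degenerates
   to b_n b_(n+k) = 0, where b is the binomial transform of the coefficients
   a_(j+k, j) (i theta)^j j! (resp. a_(j, j+k)); these tend to 0 because the series
   defining P^* = P converge. The assumed rigidity statement kills that diagonal, so
   the band shrinks to the main diagonal. There M^2 = M makes the diagonal of M take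
   only the values 0 and 1; being the binomial transform of a null, integer-valued
   sequence, it is a polynomial in n, hence constant, and P = 0 or P = 1. *)

definition falling_factorial :: "nat \<Rightarrow> nat \<Rightarrow> nat" where
  "falling_factorial r q = (r choose q) * fact q"

lemma falling_factorial_eq_0_iff: "falling_factorial r q = 0 \<longleftrightarrow> r < q"
  by (simp add: falling_factorial_def)

lemma falling_factorial_eq_0: "r < q \<Longrightarrow> falling_factorial r q = 0"
  by (simp add: falling_factorial_eq_0_iff)

lemma falling_factorial_mult_fact:
  "q \<le> r \<Longrightarrow> falling_factorial r q * fact (r - q) = fact r"
  using binomial_fact_lemma[of q r] by (simp add: falling_factorial_def mult_ac)

lemma falling_factorial_mult:
  assumes "q \<le> r"
  shows "falling_factorial r q * falling_factorial (r - q) q' = falling_factorial r (q + q')"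
proof (cases "q + q' \<le> r")
  case True
  have "falling_factorial r q * falling_factorial (r - q) q' * fact (r - (q + q'))
      = falling_factorial r q * fact (r - q)"
    using falling_factorial_mult_fact[of q' "r - q"] True by (simp add: mult.assoc)
  also have "\<dots> = falling_factorial r (q + q') * fact (r - (q + q'))"
    using falling_factorial_mult_fact assms True by simp
  finally show ?thesis by simp
next
  case False
  then have "r - q < q'" using assms by arith
  then show ?thesis using False by (simp add: falling_factorial_eq_0)
qed

lemma falling_factorial_vandermonde:
  "falling_factorial (x + y) q = (\<Sum>j\<le>q. (q choose j) * falling_factorial x j * falling_factorial y (q - j))"
proof -
  have "falling_factorial (x + y) q = (\<Sum>j\<le>q. (x choose j) * (y choose (q - j)) * fact q)"
    unfolding falling_factorial_def vandermonde[symmetric] sum_distrib_right ..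
  also have "\<dots> = (\<Sum>j\<le>q. (q choose j) * falling_factorial x j * falling_factorial y (q - j))"
  proof (rule sum.cong[OF refl])
    fix j assume "j \<in> {..q}"
    then have "fact q = (q choose j) * fact j * fact (q - j)"
      using binomial_fact_lemma[of j q] by (simp add: mult_ac)
    then show "(x choose j) * (y choose (q - j)) * fact q
        = (q choose j) * falling_factorial x j * falling_factorial y (q - j)"
      by (simp add: falling_factorial_def mult_ac)
  qed
  finally show ?thesis .
qed

(* The reordering rule y^q x^p' = SUM j. j! (q choose j) (p' choose j) (i theta)^j x^(p'-j) y^(q-j),
   applied to y^q' z^r. *)
lemma falling_factorial_normal_ordering:
  assumes "q' \<le> r"
  shows "(\<Sum>j\<le>q. fact j * (q choose j) * (p' choose j) * falling_factorial r (q + q' - j))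
    = falling_factorial (p' + r - q') q * falling_factorial r q'"
proof -
  have "falling_factorial (p' + r - q') q * falling_factorial r q'
      = (\<Sum>j\<le>q. (q choose j) * falling_factorial p' j * (falling_factorial r q' * falling_factorial (r - q') (q - j)))"
    using assms falling_factorial_vandermonde[of p' "r - q'" q]
    by (simp add: sum_distrib_left mult_ac)
  also have "\<dots> = (\<Sum>j\<le>q. fact j * (q choose j) * (p' choose j) * falling_factorial r (q + q' - j))"
  proof (rule sum.cong[OF refl])
    fix j assume "j \<in> {..q}"
    then have "q' + (q - j) = q + q' - j" by simp
    then have "falling_factorial r q' * falling_factorial (r - q') (q - j) = falling_factorial r (q + q' - j)"
      using falling_factorial_mult[OF assms, of "q - j"] by simp
    then show "(q choose j) * falling_factorial p' j * (falling_factorial r q' * falling_factorial (r - q') (q - j))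
        = fact j * (q choose j) * (p' choose j) * falling_factorial r (q + q' - j)"
      by (simp add: falling_factorial_def mult_ac)
  qed
  finally show ?thesis by simp
qed

definition binomial_transform :: "(nat \<Rightarrow> 'a::comm_ring_1) \<Rightarrow> nat \<Rightarrow> 'a" where
  "binomial_transform g r = (\<Sum>q\<le>r. of_nat (r choose q) * g q)"

lemma alternating_choose_sum:
  "(\<Sum>u\<le>m. (-1) ^ (m - u) * of_nat (m choose u)) = (if m = 0 then 1 else 0 :: 'a::comm_ring_1)"
  using binomial_ring[of "1 :: 'a" "-1" m] by (simp add: mult.commute power_0_left)

lemma alternating_choose_mult_sum:
  assumes "q \<le> n"
  shows "(\<Sum>i\<le>n. (-1) ^ (n - i) * of_nat (n choose i) * of_nat (i choose q))
    = (if q = n then 1 else 0 :: 'a::comm_ring_1)"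
proof -
  have "(\<Sum>i\<le>n. (-1) ^ (n - i) * of_nat (n choose i) * of_nat (i choose q))
      = (\<Sum>i\<in>{q..n}. (-1) ^ (n - i) * of_nat (n choose i) * (of_nat (i choose q) :: 'a))"
    by (rule sum.mono_neutral_right) (auto simp: binomial_eq_0)
  also have "\<dots> = (\<Sum>u\<le>n - q. (-1) ^ (n - (u + q)) * of_nat (n choose (u + q)) * of_nat ((u + q) choose q))"
    using sum.shift_bounds_cl_nat_ivl[of _ 0 q "n - q"] assms by (simp add: atLeast0AtMost)
  also have "\<dots> = (\<Sum>u\<le>n - q. (-1) ^ (n - q - u) * of_nat (n choose q) * of_nat ((n - q) choose u))"
  proof (rule sum.cong[OF refl])
    fix u assume "u \<in> {..n - q}"
    then have "(n choose (u + q)) * ((u + q) choose q) = (n choose q) * ((n - q) choose u)"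
      using choose_mult[of q "u + q" n] assms by simp
    then have "of_nat (n choose (u + q)) * of_nat ((u + q) choose q)
        = (of_nat (n choose q) * of_nat ((n - q) choose u) :: 'a)"
      by (metis of_nat_mult)
    then show "(-1) ^ (n - (u + q)) * of_nat (n choose (u + q)) * of_nat ((u + q) choose q)
        = (-1) ^ (n - q - u) * of_nat (n choose q) * (of_nat ((n - q) choose u) :: 'a)"
      by (simp add: mult.assoc add.commute)
  qed
  also have "\<dots> = of_nat (n choose q) * (\<Sum>u\<le>n - q. (-1) ^ (n - q - u) * of_nat ((n - q) choose u))"
    by (simp add: sum_distrib_left mult_ac)
  also have "\<dots> = (if q = n then 1 else 0)"
    unfolding alternating_choose_sum using assms by simp
  finally show ?thesis .
qed

lemma binomial_inversion:
  "(\<Sum>i\<le>n. (-1) ^ (n - i) * of_nat (n choose i) * binomial_transform g i) = g n"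
proof -
  have "(\<Sum>i\<le>n. (-1) ^ (n - i) * of_nat (n choose i) * binomial_transform g i)
      = (\<Sum>i\<le>n. \<Sum>q\<le>n. (-1) ^ (n - i) * of_nat (n choose i) * of_nat (i choose q) * g q)"
  proof (rule sum.cong[OF refl])
    fix i assume "i \<in> {..n}"
    then have "binomial_transform g i = (\<Sum>q\<le>n. of_nat (i choose q) * g q)"
      unfolding binomial_transform_def by (intro sum.mono_neutral_left) (auto simp: binomial_eq_0)
    then show "(-1) ^ (n - i) * of_nat (n choose i) * binomial_transform g i
        = (\<Sum>q\<le>n. (-1) ^ (n - i) * of_nat (n choose i) * of_nat (i choose q) * g q)"
      by (simp add: sum_distrib_left mult.assoc)
  qed
  also have "\<dots> = (\<Sum>q\<le>n. (\<Sum>i\<le>n. (-1) ^ (n - i) * of_nat (n choose i) * of_nat (i choose q)) * g q)"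
    by (subst sum.swap) (simp add: sum_distrib_right)
  also have "\<dots> = (\<Sum>q\<le>n. if q = n then g q else 0)"
    by (intro sum.cong refl) (simp add: alternating_choose_mult_sum)
  finally show ?thesis by simp
qed

lemma Ints_norm_less_1_eq_0:
  fixes x :: "'a::real_normed_algebra_1"
  assumes "x \<in> \<int>" "norm x < 1"
  shows "x = 0"
  using assms by (auto elim!: Ints_cases)

lemma binomial_transform_poly:
  fixes g :: "nat \<Rightarrow> 'a::field_char_0"
  assumes "\<And>n. N \<le> n \<Longrightarrow> g n = 0"
  obtains P where "\<And>r. poly P (of_nat r) = binomial_transform g r"
proof
  define P where "P = (\<Sum>q<N. smult (g q / fact q) (\<Prod>i<q. [:- of_nat i, 1:]))"
  fix r
  have "poly P (of_nat r) = (\<Sum>q<N. g q * (of_nat r gchoose q))"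
    by (simp add: P_def poly_sum poly_prod gbinomial_prod_rev atLeast0LessThan)
  also have "\<dots> = (\<Sum>q<N. of_nat (r choose q) * g q)"
    by (simp add: binomial_gbinomial mult.commute)
  also have "\<dots> = (\<Sum>q<N + r + 1. of_nat (r choose q) * g q)"
    using assms by (intro sum.mono_neutral_left) auto
  also have "\<dots> = binomial_transform g r"
    unfolding binomial_transform_def by (intro sum.mono_neutral_right) (auto simp: binomial_eq_0)
  finally show "poly P (of_nat r) = binomial_transform g r" .
qed

lemma poly_of_nat_01_const:
  fixes P :: "'a::{idom, ring_char_0} poly"
  assumes "\<And>r. poly P (of_nat r) \<in> {0, 1}"
  shows "poly P (of_nat r) = poly P 0"
proof -
  have "P * (P - 1) = 0"
  proof (rule ccontr)
    assume "P * (P - 1) \<noteq> 0"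
    then have "finite {x. poly (P * (P - 1)) x = 0}" by (rule poly_roots_finite)
    moreover have "range (of_nat :: nat \<Rightarrow> 'a) \<subseteq> {x. poly (P * (P - 1)) x = 0}"
      using assms by auto
    moreover have "infinite (range (of_nat :: nat \<Rightarrow> 'a))"
      by (rule range_inj_infinite) (simp add: inj_on_def)
    ultimately show False by (meson finite_subset)
  qed
  then have "P = 0 \<or> P = 1" by simp
  then show ?thesis by auto
qed

lemma binomial_transform_01_imp_eq_0:
  fixes g :: "nat \<Rightarrow> 'a::real_normed_field"
  assumes "g \<longlonglongrightarrow> 0" "\<And>r. binomial_transform g r \<in> {0, 1}" "n > 0"
  shows "g n = 0"
proof -
  have "binomial_transform g i \<in> \<int>" for i
    using assms(2)[of i] by auto
  then have "g m \<in> \<int>" for m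
    unfolding binomial_inversion[of m g, symmetric] by (auto intro!: Ints_sum Ints_mult Ints_power)
  moreover obtain N where "\<And>m. N \<le> m \<Longrightarrow> norm (g m) < 1"
    using LIMSEQ_D[OF assms(1), of 1] by auto
  ultimately have "g m = 0" if "N \<le> m" for m
    using that by (intro Ints_norm_less_1_eq_0) auto
  then obtain P where P: "\<And>r. poly P (of_nat r) = binomial_transform g r"
    using binomial_transform_poly by blast
  have "poly P (of_nat r) = poly P 0" for r
    by (rule poly_of_nat_01_const) (use assms(2) P in auto)
  then have "binomial_transform g r = g 0" for r
    using P[of r] P[of 0] by (simp add: binomial_transform_def)
  moreover have "binomial_transform (\<lambda>q. if q = 0 then g 0 else 0) r = g 0" for r
    unfolding binomial_transform_def by (subst sum.atMost_shift) simp
  ultimately show ?thesis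
    using binomial_inversion[of n g] binomial_inversion[of n "\<lambda>q. if q = 0 then g 0 else 0"] assms(3)
    by simp
qed

definition binomial_rigidity :: bool where
  "binomial_rigidity \<longleftrightarrow> (\<forall>b :: nat \<Rightarrow> complex.
      (\<exists>l::nat. l \<ge> 1 \<and> (\<forall>n. b n * b (n + l) = 0)) \<longrightarrow>
      (\<lambda>n. \<Sum>i\<le>n. (-1) ^ (n - i) * of_nat (n choose i) * b i) \<longlonglongrightarrow> 0 \<longrightarrow>
      (\<forall>n. b n = 0))"

lemma binomial_rigidity_imp_eq_0:
  fixes g :: "nat \<Rightarrow> complex"
  assumes "binomial_rigidity" "g \<longlonglongrightarrow> 0" "l \<ge> 1"
    and "\<And>n. binomial_transform g n * binomial_transform g (n + l) = 0"
  shows "g n = 0"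
proof -
  have "(\<lambda>n. \<Sum>i\<le>n. (-1) ^ (n - i) * of_nat (n choose i) * binomial_transform g i) \<longlonglongrightarrow> 0"
    using assms(2) by (simp add: binomial_inversion)
  moreover have "\<exists>l\<ge>1. \<forall>n. binomial_transform g n * binomial_transform g (n + l) = 0"
    using assms(3,4) by blast
  ultimately have "\<forall>n. binomial_transform g n = 0"
    using spec[OF assms(1)[unfolded binomial_rigidity_def], of "binomial_transform g"] by blast
  then show ?thesis
    using binomial_inversion[of n g] by simp
qed

(* fock_monomial theta p q r t is the coefficient of z^t in x^p y^q z^r for the
   representation above; fock_matrix theta a r t is the same for the element with
   coefficients a. *)
definition fock_monomial :: "real \<Rightarrow> nat \<Rightarrow> nat \<Rightarrow> nat \<Rightarrow> nat \<Rightarrow> complex" where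
  "fock_monomial \<theta> p q r t =
     (if t + q = p + r then (\<i> * of_real \<theta>) ^ q * of_nat (falling_factorial r q) else 0)"

definition fock_matrix :: "real \<Rightarrow> (nat \<Rightarrow> nat \<Rightarrow> complex) \<Rightarrow> nat \<Rightarrow> nat \<Rightarrow> complex" where
  "fock_matrix \<theta> a r t = (\<Sum>p\<le>t. \<Sum>q\<le>r. a p q * fock_monomial \<theta> p q r t)"

definition reorder_coeff :: "real \<Rightarrow> nat \<Rightarrow> nat \<Rightarrow> nat \<Rightarrow> complex" where
  "reorder_coeff \<theta> j q p = of_nat (fact j * (q choose j) * (p choose j)) * (\<i> * of_real \<theta>) ^ j"

lemma fock_monomial_nonzero:
  "fock_monomial \<theta> p q r t \<noteq> 0 \<Longrightarrow> q \<le> r \<and> p \<le> t \<and> t + q = p + r"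
  by (auto simp: fock_monomial_def falling_factorial_eq_0_iff split: if_splits)

lemma fock_matrix_box:
  assumes "r < N" "t < N"
  shows "fock_matrix \<theta> a r t = (\<Sum>(p, q)\<in>{..<N} \<times> {..<N}. a p q * fock_monomial \<theta> p q r t)"
proof -
  have "fock_matrix \<theta> a r t = (\<Sum>(p, q)\<in>{..t} \<times> {..r}. a p q * fock_monomial \<theta> p q r t)"
    by (simp add: fock_matrix_def sum.cartesian_product)
  also have "\<dots> = (\<Sum>(p, q)\<in>{..<N} \<times> {..<N}. a p q * fock_monomial \<theta> p q r t)"
    using assms fock_monomial_nonzero[of \<theta> _ _ r t] by (intro sum.mono_neutral_left) force+
  finally show ?thesis .
qed

lemma reorder_coeff_mult_fock_monomial:
  assumes "j \<le> q"
  shows "reorder_coeff \<theta> j q p' * fock_monomial \<theta> (p + p' - j) (q + q' - j) r t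
    = (if t + q + q' = p + p' + r then (\<i> * of_real \<theta>) ^ (q + q')
         * of_nat (fact j * (q choose j) * (p' choose j) * falling_factorial r (q + q' - j)) else 0)"
proof (cases "j \<le> p'")
  case True
  then have "(\<i> * of_real \<theta>) ^ j * (\<i> * of_real \<theta>) ^ (q + q' - j) = ((\<i> * of_real \<theta>) ^ (q + q') :: complex)"
    using assms by (simp flip: power_add)
  moreover have "t + (q + q' - j) = p + p' - j + r \<longleftrightarrow> t + q + q' = p + p' + r"
    using assms True by auto
  ultimately show ?thesis
    by (auto simp: reorder_coeff_def fock_monomial_def mult_ac)
qed (simp add: reorder_coeff_def)

lemma sum_fock_monomial_mult:
  assumes "q' \<le> r" "p' + r - q' \<le> S"
  shows "(\<Sum>s\<le>S. fock_monomial \<theta> p q s t * fock_monomial \<theta> p' q' r s)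
    = (if t + q + q' = p + p' + r then (\<i> * of_real \<theta>) ^ (q + q')
         * of_nat (falling_factorial (p' + r - q') q * falling_factorial r q') else 0)"
proof -
  define s0 where "s0 = p' + r - q'"
  have "fock_monomial \<theta> p' q' r s = 0" if "s \<noteq> s0" for s
    using that fock_monomial_nonzero[of \<theta> p' q' r s] unfolding s0_def by linarith
  then have "(\<Sum>s\<le>S. fock_monomial \<theta> p q s t * fock_monomial \<theta> p' q' r s)
      = (\<Sum>s\<in>{s0}. fock_monomial \<theta> p q s t * fock_monomial \<theta> p' q' r s)"
    using assms by (intro sum.mono_neutral_right) (auto simp: s0_def)
  also have "\<dots> = (if t + q + q' = p + p' + r then (\<i> * of_real \<theta>) ^ (q + q')
      * of_nat (falling_factorial s0 q * falling_factorial r q') else 0)"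
    using assms by (auto simp: fock_monomial_def s0_def power_add)
  finally show ?thesis by (simp add: s0_def)
qed

lemma fock_monomial_mult:
  assumes "q' \<le> r \<Longrightarrow> p' + r - q' \<le> S"
  shows "(\<Sum>s\<le>S. fock_monomial \<theta> p q s t * fock_monomial \<theta> p' q' r s)
    = (\<Sum>j\<le>q. reorder_coeff \<theta> j q p' * fock_monomial \<theta> (p + p' - j) (q + q' - j) r t)"
proof (cases "q' \<le> r")
  case True
  have "falling_factorial (p' + r - q') q * falling_factorial r q'
      = (\<Sum>j\<le>q. fact j * (q choose j) * (p' choose j) * falling_factorial r (q + q' - j))"
    unfolding falling_factorial_normal_ordering[OF True] ..
  then show ?thesis
    using True assms
    by (cases "t + q + q' = p + p' + r")
       (simp_all add: sum_fock_monomial_mult reorder_coeff_mult_fock_monomial sum_distrib_left)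
next
  case False
  then have "fock_monomial \<theta> p' q' r s = 0" for s
    by (simp add: fock_monomial_def falling_factorial_eq_0)
  moreover have "fock_monomial \<theta> (p + p' - j) (q + q' - j) r t = 0" if "j \<le> q" for j
    using False that by (simp add: fock_monomial_def falling_factorial_eq_0)
  ultimately show ?thesis
    by (auto intro!: sum.neutral)
qed

definition banded :: "nat \<Rightarrow> (nat \<Rightarrow> nat \<Rightarrow> complex) \<Rightarrow> bool" where
  "banded k a \<longleftrightarrow> (\<forall>p q. a p q \<noteq> 0 \<longrightarrow> p \<le> q + k \<and> q \<le> p + k)"

lemma fock_matrix_eq_0:
  assumes "banded k a" "r + k < t \<or> t + k < r"
  shows "fock_matrix \<theta> a r t = 0"
proof -
  have "a p q * fock_monomial \<theta> p q r t = 0" for p q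
  proof (rule ccontr)
    assume "a p q * fock_monomial \<theta> p q r t \<noteq> 0"
    then have "p \<le> q + k" "q \<le> p + k" "t + q = p + r"
      using assms(1) fock_monomial_nonzero[of \<theta> p q r t] by (auto simp: banded_def)
    then show False using assms(2) by linarith
  qed
  then show ?thesis by (simp add: fock_matrix_def del: mult_eq_0_iff)
qed

lemma moyal_prod_term_eq:
  "moyal_prod_term \<theta> a b m n j = (\<Sum>(p, s)\<in>{..m} \<times> {..n}.
     a p (j + n - s) * b (j + m - p) s * reorder_coeff \<theta> j (j + n - s) (j + m - p))"
  by (simp add: moyal_prod_term_def reorder_coeff_def sum.cartesian_product mult_ac)

lemma moyal_prod_eq_finite_sum:
  assumes "banded k a" "moyal_prod_eq \<theta> a b c" "m + k < J"
  shows "c m n = (\<Sum>j<J. moyal_prod_term \<theta> a b m n j)"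
proof -
  have "moyal_prod_term \<theta> a b m n j = 0" if "j \<notin> {..<J}" for j
  proof -
    have "a p (j + n - s) = 0" if "p \<le> m" "s \<le> n" for p s
      using assms(1,3) that \<open>j \<notin> {..<J}\<close> unfolding banded_def by force
    then show ?thesis by (simp add: moyal_prod_term_def)
  qed
  then have "moyal_prod_term \<theta> a b m n sums (\<Sum>j<J. moyal_prod_term \<theta> a b m n j)"
    by (intro sums_finite) auto
  moreover have "moyal_prod_term \<theta> a b m n sums c m n"
    using assms(2) by (simp add: moyal_prod_eq_def)
  ultimately show ?thesis by (simp add: sums_iff)
qed

lemma moyal_prod_term_fock_sum:
  assumes "r < N" "t < N" "N + j \<le> M"
  shows "(\<Sum>(m, n)\<in>{..<N} \<times> {..<N}. moyal_prod_term \<theta> a b m n j * fock_monomial \<theta> m n r t)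
    = (\<Sum>((p, q), (p', q'))\<in>({..<M} \<times> {..<M}) \<times> ({..<M} \<times> {..<M}).
         a p q * b p' q' * reorder_coeff \<theta> j q p' * fock_monomial \<theta> (p + p' - j) (q + q' - j) r t)"
    (is "_ = (\<Sum>x\<in>?box. ?g x)")
proof -
  define U where "U = {((p, q), (p', q')). j \<le> q \<and> j \<le> p' \<and> p + p' - j < N \<and> q + q' - j < N}"
  have "(\<Sum>(m, n)\<in>{..<N} \<times> {..<N}. moyal_prod_term \<theta> a b m n j * fock_monomial \<theta> m n r t)
      = (\<Sum>((m, n), (p, s))\<in>Sigma ({..<N} \<times> {..<N}) (\<lambda>(m, n). {..m} \<times> {..n}).
           a p (j + n - s) * b (j + m - p) s * reorder_coeff \<theta> j (j + n - s) (j + m - p)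
           * fock_monomial \<theta> m n r t)"
    by (subst sum.Sigma[symmetric]) (auto simp: moyal_prod_term_eq sum_distrib_right split_def intro!: sum.cong)
  also have "\<dots> = (\<Sum>x\<in>U. ?g x)"
    by (rule sum.reindex_bij_witness[where i = "\<lambda>((p, q), (p', q')). ((p + p' - j, q + q' - j), (p, q'))"
          and j = "\<lambda>((m, n), (p, s)). ((p, j + n - s), (j + m - p, s))"]) (auto simp: U_def)
  also have "\<dots> = (\<Sum>x\<in>?box. ?g x)"
  proof (rule sum.mono_neutral_left)
    show "U \<subseteq> ?box" using assms(3) by (auto simp: U_def)
    show "\<forall>x\<in>?box - U. ?g x = 0"
      using assms(1,2) fock_monomial_nonzero by (fastforce simp: U_def reorder_coeff_def)
  qed simp
  finally show ?thesis .
qed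

lemma fock_monomial_mult_banded:
  assumes "q \<le> p + k" "p' \<le> q' + k" "t + k < J"
  shows "(\<Sum>j<J. reorder_coeff \<theta> j q p' * fock_monomial \<theta> (p + p' - j) (q + q' - j) r t)
    = (\<Sum>s\<le>r + k. fock_monomial \<theta> p q s t * fock_monomial \<theta> p' q' r s)"
proof -
  let ?X = "\<lambda>j. reorder_coeff \<theta> j q p' * fock_monomial \<theta> (p + p' - j) (q + q' - j) r t"
  have nonzero: "j \<le> q \<and> p \<le> t" if "?X j \<noteq> 0" for j
    using that fock_monomial_nonzero[of \<theta> "p + p' - j" "q + q' - j" r t]
    by (auto simp: reorder_coeff_def)
  have "(\<Sum>j<J. ?X j) = (\<Sum>j\<le>q. ?X j)"
  proof (cases "p \<le> t")
    case True
    then have "q < J" using assms by linarith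
    then show ?thesis using nonzero by (intro sum.mono_neutral_right) auto
  next
    case False
    then have "?X j = 0" for j using nonzero by blast
    then show ?thesis by (simp del: mult_eq_0_iff)
  qed
  also have "\<dots> = (\<Sum>s\<le>r + k. fock_monomial \<theta> p q s t * fock_monomial \<theta> p' q' r s)"
    by (rule fock_monomial_mult[symmetric]) (use assms(2) in auto)
  finally show ?thesis .
qed

lemma fock_matrix_moyal_prod_expand:
  assumes "banded k a" "moyal_prod_eq \<theta> a b c" "t + k < J" "r < N" "t < N" "N + J \<le> M"
  shows "fock_matrix \<theta> c r t = (\<Sum>((p, q), (p', q'))\<in>({..<M} \<times> {..<M}) \<times> ({..<M} \<times> {..<M}).
      a p q * b p' q' * (\<Sum>j<J. reorder_coeff \<theta> j q p' * fock_monomial \<theta> (p + p' - j) (q + q' - j) r t))"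
proof -
  let ?F = "\<lambda>m n. fock_monomial \<theta> m n r t"
  have "fock_matrix \<theta> c r t = (\<Sum>(m, n)\<in>{..<N} \<times> {..<N}. c m n * ?F m n)"
    using assms(4,5) by (rule fock_matrix_box)
  also have "\<dots> = (\<Sum>(m, n)\<in>{..<N} \<times> {..<N}. \<Sum>j<J. moyal_prod_term \<theta> a b m n j * ?F m n)"
  proof (intro sum.cong refl, clarify)
    fix m n
    show "c m n * ?F m n = (\<Sum>j<J. moyal_prod_term \<theta> a b m n j * ?F m n)"
    proof (cases "m \<le> t")
      case True
      then have "m + k < J" using assms(3) by simp
      then show ?thesis
        using moyal_prod_eq_finite_sum[OF assms(1,2)] by (simp add: sum_distrib_right)
    next
      case False
      then have "?F m n = 0" using fock_monomial_nonzero by blast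
      then show ?thesis by simp
    qed
  qed
  also have "\<dots> = (\<Sum>j<J. \<Sum>(m, n)\<in>{..<N} \<times> {..<N}. moyal_prod_term \<theta> a b m n j * ?F m n)"
    unfolding split_def by (rule sum.swap)
  also have "\<dots> = (\<Sum>j<J. \<Sum>((p, q), (p', q'))\<in>({..<M} \<times> {..<M}) \<times> ({..<M} \<times> {..<M}).
      a p q * b p' q' * reorder_coeff \<theta> j q p' * fock_monomial \<theta> (p + p' - j) (q + q' - j) r t)"
    using assms(4-6) by (intro sum.cong refl moyal_prod_term_fock_sum) auto
  also have "\<dots> = (\<Sum>((p, q), (p', q'))\<in>({..<M} \<times> {..<M}) \<times> ({..<M} \<times> {..<M}).
      a p q * b p' q' * (\<Sum>j<J. reorder_coeff \<theta> j q p' * fock_monomial \<theta> (p + p' - j) (q + q' - j) r t))"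
    by (subst sum.swap) (simp add: split_def sum_distrib_left mult.assoc)
  finally show ?thesis .
qed

lemma sum_fock_matrix_mult_expand:
  assumes "t < M" "r + k < M"
  shows "(\<Sum>s\<le>r + k. fock_matrix \<theta> a s t * fock_matrix \<theta> b r s)
    = (\<Sum>((p, q), (p', q'))\<in>({..<M} \<times> {..<M}) \<times> ({..<M} \<times> {..<M}).
        a p q * b p' q' * (\<Sum>s\<le>r + k. fock_monomial \<theta> p q s t * fock_monomial \<theta> p' q' r s))"
proof -
  have "fock_matrix \<theta> a s t * fock_matrix \<theta> b r s
      = (\<Sum>((p, q), (p', q'))\<in>({..<M} \<times> {..<M}) \<times> ({..<M} \<times> {..<M}).
          (a p q * fock_monomial \<theta> p q s t) * (b p' q' * fock_monomial \<theta> p' q' r s))"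
    if "s \<le> r + k" for s
    using that assms
    by (simp add: fock_matrix_box[of _ M] sum_product sum.cartesian_product split_def)
  then show ?thesis
    by (simp add: sum.swap[of _ "{..r + k}"] split_def sum_distrib_left mult_ac)
qed

lemma fock_matrix_mult:
  assumes "banded k a" "banded k b" "moyal_prod_eq \<theta> a b c"
  shows "fock_matrix \<theta> c r t = (\<Sum>s\<le>r + k. fock_matrix \<theta> a s t * fock_matrix \<theta> b r s)"
proof -
  define J where "J = t + k + 1"
  define M where "M = t + r + k + 1 + J"
  have "fock_matrix \<theta> c r t = (\<Sum>((p, q), (p', q'))\<in>({..<M} \<times> {..<M}) \<times> ({..<M} \<times> {..<M}).
      a p q * b p' q' * (\<Sum>j<J. reorder_coeff \<theta> j q p' * fock_monomial \<theta> (p + p' - j) (q + q' - j) r t))"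
    by (rule fock_matrix_moyal_prod_expand[OF assms(1,3), where N = "t + r + k + 1"])
       (simp_all add: J_def M_def)
  also have "\<dots> = (\<Sum>((p, q), (p', q'))\<in>({..<M} \<times> {..<M}) \<times> ({..<M} \<times> {..<M}).
      a p q * b p' q' * (\<Sum>s\<le>r + k. fock_monomial \<theta> p q s t * fock_monomial \<theta> p' q' r s))"
  proof (intro sum.cong refl, clarify)
    fix p q p' q'
    have "t + k < J" by (simp add: J_def)
    moreover have "q \<le> p + k" "p' \<le> q' + k" if "a p q \<noteq> 0" "b p' q' \<noteq> 0"
      using assms(1,2) that by (auto simp: banded_def)
    ultimately show "a p q * b p' q' * (\<Sum>j<J. reorder_coeff \<theta> j q p' * fock_monomial \<theta> (p + p' - j) (q + q' - j) r t)
        = a p q * b p' q' * (\<Sum>s\<le>r + k. fock_monomial \<theta> p q s t * fock_monomial \<theta> p' q' r s)"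
      using fock_monomial_mult_banded by fastforce
  qed
  also have "\<dots> = (\<Sum>s\<le>r + k. fock_matrix \<theta> a s t * fock_matrix \<theta> b r s)"
    by (rule sum_fock_matrix_mult_expand[symmetric]) (simp_all add: M_def)
  finally show ?thesis .
qed

lemma fock_matrix_mult_corner:
  assumes "banded k a" "banded k b" "moyal_prod_eq \<theta> a b c"
    and "r + k = s \<and> s + k = t \<or> t + k = s \<and> s + k = r"
  shows "fock_matrix \<theta> c r t = fock_matrix \<theta> a s t * fock_matrix \<theta> b r s"
proof -
  have "fock_matrix \<theta> a s' t * fock_matrix \<theta> b r s' = 0" if "s' \<noteq> s" for s'
    using fock_matrix_eq_0[OF assms(1), of s' t] fock_matrix_eq_0[OF assms(2), of r s'] assms(4) that
    by (cases "s' < s") auto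
  then have "(\<Sum>s'\<le>r + k. fock_matrix \<theta> a s' t * fock_matrix \<theta> b r s')
      = (\<Sum>s'\<in>{s}. fock_matrix \<theta> a s' t * fock_matrix \<theta> b r s')"
    using assms(4) by (intro sum.mono_neutral_right) auto
  then show ?thesis
    using fock_matrix_mult[OF assms(1-3)] by simp
qed

lemma fock_matrix_superdiag:
  "fock_matrix \<theta> a r (r + d)
    = binomial_transform (\<lambda>q. a (q + d) q * (\<i> * of_real \<theta>) ^ q * fact q) r"
proof -
  have "fock_matrix \<theta> a r (r + d)
      = (\<Sum>q\<le>r. \<Sum>p\<le>r + d. if p = q + d then a p q * fock_monomial \<theta> p q r (r + d) else 0)"
    unfolding fock_matrix_def by (subst sum.swap) (intro sum.cong refl, auto simp: fock_monomial_def)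
  also have "\<dots> = binomial_transform (\<lambda>q. a (q + d) q * (\<i> * of_real \<theta>) ^ q * fact q) r"
    by (simp add: binomial_transform_def fock_monomial_def falling_factorial_def mult_ac)
  finally show ?thesis .
qed

lemma fock_matrix_subdiag:
  "fock_matrix \<theta> a (r + d) r = of_nat (falling_factorial (r + d) d)
    * binomial_transform (\<lambda>p. a p (p + d) * (\<i> * of_real \<theta>) ^ (p + d) * fact p) r"
proof -
  have "fock_matrix \<theta> a (r + d) r
      = (\<Sum>p\<le>r. \<Sum>q\<le>r + d. if q = p + d then a p q * fock_monomial \<theta> p q (r + d) r else 0)"
    unfolding fock_matrix_def by (intro sum.cong refl) (auto simp: fock_monomial_def)
  also have "\<dots> = (\<Sum>p\<le>r. a p (p + d) * (\<i> * of_real \<theta>) ^ (p + d) * of_nat (falling_factorial (r + d) (p + d)))"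
    by (simp add: fock_monomial_def mult.assoc)
  also have "\<dots> = of_nat (falling_factorial (r + d) d)
      * binomial_transform (\<lambda>p. a p (p + d) * (\<i> * of_real \<theta>) ^ (p + d) * fact p) r"
  proof -
    have "falling_factorial (r + d) (p + d) = falling_factorial (r + d) d * ((r choose p) * fact p)" for p
      using falling_factorial_mult[of d "r + d" p] by (simp add: falling_factorial_def add.commute)
    then show ?thesis
      by (simp add: binomial_transform_def sum_distrib_left mult_ac)
  qed
  finally show ?thesis .
qed

lemma moyal_adj_diagonal_tendsto_0:
  assumes "moyal_adj_eq \<theta> a c" "\<theta> \<ge> 0"
  shows "(\<lambda>j. a (m + j) (n + j) * (\<i> * of_real \<theta>) ^ j * fact j) \<longlonglongrightarrow> 0"
proof (rule tendsto_0_le[where f = "moyal_adj_term \<theta> a m n" and K = 1])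
  have "summable (moyal_adj_term \<theta> a m n)"
    using assms(1) by (auto simp: moyal_adj_eq_def sums_iff)
  then show "moyal_adj_term \<theta> a m n \<longlonglongrightarrow> 0"
    by (rule summable_LIMSEQ_zero)
  show "\<forall>\<^sub>F j in sequentially.
      norm (a (m + j) (n + j) * (\<i> * of_real \<theta>) ^ j * fact j) \<le> norm (moyal_adj_term \<theta> a m n j) * 1"
  proof (rule always_eventually, rule allI)
    fix j
    have "1 \<le> ((n + j) choose j) * ((m + j) choose j)"
      by (simp add: Suc_leI)
    then have "(1::real) \<le> of_nat (((n + j) choose j) * ((m + j) choose j))"
      by (metis of_nat_1 of_nat_le_iff)
    then have "norm (a (m + j) (n + j) * (\<i> * of_real \<theta>) ^ j * fact j)
        \<le> norm (a (m + j) (n + j) * (\<i> * of_real \<theta>) ^ j * fact j) * of_nat (((n + j) choose j) * ((m + j) choose j))"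
      using mult_left_mono[OF _ norm_ge_zero] by fastforce
    also have "\<dots> = norm (moyal_adj_term \<theta> a m n j)"
      using assms(2) by (simp add: moyal_adj_term_def norm_mult norm_power)
    finally show "norm (a (m + j) (n + j) * (\<i> * of_real \<theta>) ^ j * fact j) \<le> norm (moyal_adj_term \<theta> a m n j) * 1"
      by simp
  qed
qed

lemma projection_superdiag_eq_0:
  assumes "binomial_rigidity" "\<theta> > 0" "banded k a" "k > 0"
    and "moyal_prod_eq \<theta> a a a" "moyal_adj_eq \<theta> a a"
  shows "a (q + k) q = 0"
proof -
  define g where "g = (\<lambda>q. a (q + k) q * (\<i> * of_real \<theta>) ^ q * fact q)"
  have diag: "fock_matrix \<theta> a r (r + k) = binomial_transform g r" for r
    by (simp add: fock_matrix_superdiag g_def)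
  have "binomial_transform g (n + k) * binomial_transform g n = 0" for n
  proof -
    have "binomial_transform g (n + k) * binomial_transform g n = fock_matrix \<theta> a n (n + k + k)"
      using fock_matrix_mult_corner[OF assms(3,3,5), of n "n + k" "n + k + k"] by (simp add: diag)
    also have "\<dots> = 0"
      using assms(4) by (intro fock_matrix_eq_0[OF assms(3)]) simp
    finally show ?thesis .
  qed
  moreover have "g \<longlonglongrightarrow> 0"
    using moyal_adj_diagonal_tendsto_0[OF assms(6), of k 0] assms(2) by (simp add: g_def add.commute)
  ultimately have "g q = 0"
    using binomial_rigidity_imp_eq_0[OF assms(1), of g k] assms(4) by (simp add: mult.commute)
  then show ?thesis
    using assms(2) by (simp add: g_def)
qed

lemma projection_subdiag_eq_0:
  assumes "binomial_rigidity" "\<theta> > 0" "banded k a" "k > 0"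
    and "moyal_prod_eq \<theta> a a a" "moyal_adj_eq \<theta> a a"
  shows "a q (q + k) = 0"
proof -
  define g where "g = (\<lambda>p. a p (p + k) * (\<i> * of_real \<theta>) ^ (p + k) * fact p)"
  have diag: "fock_matrix \<theta> a (r + k) r = of_nat (falling_factorial (r + k) k) * binomial_transform g r" for r
    by (simp add: fock_matrix_subdiag g_def)
  have "binomial_transform g n * binomial_transform g (n + k) = 0" for n
  proof -
    have "of_nat (falling_factorial (n + k) k * falling_factorial (n + k + k) k)
        * (binomial_transform g n * binomial_transform g (n + k)) = fock_matrix \<theta> a (n + k + k) n"
      using fock_matrix_mult_corner[OF assms(3,3,5), of "n + k + k" "n + k" n] by (simp add: diag mult_ac)
    also have "\<dots> = 0"
      using assms(4) by (intro fock_matrix_eq_0[OF assms(3)]) simp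
    finally show ?thesis
      by (simp add: falling_factorial_eq_0_iff)
  qed
  moreover have "g \<longlonglongrightarrow> 0"
  proof -
    have "(\<lambda>j. a (0 + j) (k + j) * (\<i> * of_real \<theta>) ^ j * fact j) \<longlonglongrightarrow> 0"
      using assms(2) by (intro moyal_adj_diagonal_tendsto_0[OF assms(6)]) simp
    then have "(\<lambda>j. (\<i> * of_real \<theta>) ^ k * (a (0 + j) (k + j) * (\<i> * of_real \<theta>) ^ j * fact j)) \<longlonglongrightarrow> 0"
      by (rule tendsto_mult_right_zero)
    then show ?thesis
      by (simp add: g_def power_add mult_ac add.commute)
  qed
  ultimately have "g q = 0"
    using binomial_rigidity_imp_eq_0[OF assms(1), of g k] assms(4) by simp
  then show ?thesis
    using assms(2) by (simp add: g_def)
qed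

lemma projection_banded_0:
  assumes "binomial_rigidity" "\<theta> > 0" "moyal_prod_eq \<theta> a a a" "moyal_adj_eq \<theta> a a"
  shows "banded k a \<Longrightarrow> banded 0 a"
proof (induction k)
  case (Suc k)
  have "a (q + Suc k) q = 0" "a q (q + Suc k) = 0" for q
    using projection_superdiag_eq_0[OF assms(1,2) Suc.prems _ assms(3,4)]
      projection_subdiag_eq_0[OF assms(1,2) Suc.prems _ assms(3,4)] by auto
  have "banded k a"
    unfolding banded_def
  proof (intro allI impI)
    fix p q assume "a p q \<noteq> 0"
    then have "p \<le> q + Suc k" "q \<le> p + Suc k" "p \<noteq> q + Suc k" "q \<noteq> p + Suc k"
      using Suc.prems \<open>\<And>q. a (q + Suc k) q = 0\<close> \<open>\<And>q. a q (q + Suc k) = 0\<close>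
      unfolding banded_def by auto
    then show "p \<le> q + k \<and> q \<le> p + k" by linarith
  qed
  then show ?case by (rule Suc.IH)
qed

lemma projection_banded_0_trivial:
  assumes "\<theta> > 0" "banded 0 a" "moyal_prod_eq \<theta> a a a" "moyal_adj_eq \<theta> a a"
  shows "a = (\<lambda>p q. 0) \<or> a = unit_coeff"
proof -
  define g where "g = (\<lambda>q. a q q * (\<i> * of_real \<theta>) ^ q * fact q)"
  have diag: "fock_matrix \<theta> a r r = binomial_transform g r" for r
    using fock_matrix_superdiag[of \<theta> a r 0] by (simp add: g_def)
  have "binomial_transform g r \<in> {0, 1}" for r
  proof -
    have "binomial_transform g r = binomial_transform g r * binomial_transform g r"
      using fock_matrix_mult_corner[OF assms(2,2,3), of r r r] by (simp add: diag)
    then show ?thesis by auto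
  qed
  moreover have "g \<longlonglongrightarrow> 0"
    using moyal_adj_diagonal_tendsto_0[OF assms(4), of 0 0] assms(1) by (simp add: g_def)
  ultimately have "g n = 0" if "n > 0" for n
    using binomial_transform_01_imp_eq_0 that by blast
  then have diag_0: "a n n = 0" if "n > 0" for n
    using that assms(1) by (simp add: g_def)
  have off_diag: "a p q = 0" if "p \<noteq> q" for p q
    using assms(2) that unfolding banded_def by force
  define c where "c = a 0 0"
  have a_eq: "a = (\<lambda>p q. if p = 0 \<and> q = 0 then c else 0)"
    using diag_0 off_diag by (intro ext) (metis c_def neq0_conv)
  have "c \<in> {0, 1}"
    using \<open>binomial_transform g 0 \<in> {0, 1}\<close> by (simp add: binomial_transform_def g_def c_def)
  then show ?thesis
    unfolding a_eq unit_coeff_def by (auto simp: fun_eq_iff)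
qed

theorem theorem1p3:
  fixes \<theta> :: real and a :: "nat \<Rightarrow> nat \<Rightarrow> complex" and k :: nat
  assumes seq_hyp: "\<forall>b :: nat \<Rightarrow> complex.
      (\<exists>l::nat. l \<ge> 1 \<and> (\<forall>n. b n * b (n + l) = 0)) \<longrightarrow>
      (\<lambda>n. \<Sum>i\<le>n. (-1) ^ (n - i) * of_nat (n choose i) * b i) \<longlonglongrightarrow> 0 \<longrightarrow>
      (\<forall>n. b n = 0)"
    and "\<theta> > 0"
    and "schwartz_coeff a"
    and "moyal_prod_eq \<theta> a a a"
    and "moyal_adj_eq \<theta> a a"
    and "\<forall>p q. (if p \<ge> q then p - q else q - p) > k \<longrightarrow> a p q = 0"
  shows "a = (\<lambda>p q. 0) \<or> a = unit_coeff"
proof -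
  have "binomial_rigidity"
    using seq_hyp unfolding binomial_rigidity_def .
  moreover have "banded k a"
    unfolding banded_def
  proof (intro allI impI)
    fix p q assume "a p q \<noteq> 0"
    then have "\<not> (if p \<ge> q then p - q else q - p) > k" using assms(6) by blast
    then show "p \<le> q + k \<and> q \<le> p + k" by (auto split: if_splits)
  qed
  ultimately have "banded 0 a"
    using projection_banded_0 assms(2,4,5) by blast
  then show ?thesis
    using projection_banded_0_trivial assms(2,4,5) by blast
qed

end
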